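(* Let $0<\lambda<1$, $0<\beta<1$. The nonzero proper ideals of $\mathcal{B}'(\lambda,\beta)$ are exactly the following: (i) if $\beta=\lambda\neq\tfrac12$: $\mathbb{R}c\subset\operatorname{span}\{b,c\}\subset\operatorname{span}\{a,b,c\}$; (ii) if $\beta=1-\lambda$, $\lambda\neq\tfrac12$: $\mathbb{R}c\subset\operatorname{span}\{a,c\}\subset\operatorname{span}\{a,b,c\}$; (iii) if $\beta\neq\lambda$ and $\beta\neq 1-\lambda$: $\mathbb{R}c\subset\operatorname{span}\{a,b,c\}$; (iv) if $\lambda=\beta=\tfrac12$: $\mathbb{R}c$, $\operatorname{span}\{a,c\}$, $\operatorname{span}\{b,c\}$, $\operatorname{span}\{a,b,c\}$ (with $\mathbb{R}c$ contained in both $2$-dimensional ideals, which are both contained in $\operatorname{span}\{a,b,c\}$).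
   Context: For real parameters $0<\lambda<1$ and $0<\beta<1$, $\mathcal{B}'(\lambda,\beta)$ denotes the commutative (non-associative) $4$-dimensional real algebra with basis $\{o,a,b,c\}$ whose bilinear commutative multiplication $\circ$ is determined by $o\circ o=o$, $o\circ a=\lambda a$, $o\circ b=\lambda b$, $a\circ a=a$, $b\circ b=b$, $a\circ b=\frac{\lambda-\beta}{\lambda}a+\frac{\lambda+\beta-1}{\lambda}b+c$, and $c\circ x=x\circ c=0$ for every $x$. (In the paper the basis vector $c$ is written $ab$.) An ideal is a linear subspace $I$ with $x\circ I\subseteq I$ for all $x$ in the algebra. *)

theory Defs
  imports "HOL-Analysis.Analysis"
begin

text \<open>The algebra B'(lambda,beta) is modelled on real^4; the basis vectors
o, a, b, c are the standard basis vectors with indices 1,2,3,4.\<close>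

definition bo :: "real^4" where "bo = axis 1 1"
definition ba :: "real^4" where "ba = axis 2 1"
definition bb :: "real^4" where "bb = axis 3 1"
definition bc :: "real^4" where "bc = axis 4 1"

definition Btab :: "real \<Rightarrow> real \<Rightarrow> 4 \<Rightarrow> 4 \<Rightarrow> real^4" where
  "Btab lam bet i j =
     (if i = 1 \<and> j = 1 then bo
      else if (i = 1 \<and> j = 2) \<or> (i = 2 \<and> j = 1) then lam *\<^sub>R ba
      else if (i = 1 \<and> j = 3) \<or> (i = 3 \<and> j = 1) then lam *\<^sub>R bb
      else if i = 2 \<and> j = 2 then ba
      else if i = 3 \<and> j = 3 then bb
      else if (i = 2 \<and> j = 3) \<or> (i = 3 \<and> j = 2) then
        ((lam - bet) / lam) *\<^sub>R ba + ((lam + bet - 1) / lam) *\<^sub>R bb + bc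
      else 0)"

definition Bmult :: "real \<Rightarrow> real \<Rightarrow> real^4 \<Rightarrow> real^4 \<Rightarrow> real^4" where
  "Bmult lam bet x y = (\<Sum>i\<in>UNIV. \<Sum>j\<in>UNIV. (x $ i * y $ j) *\<^sub>R Btab lam bet i j)"

definition B_ideal :: "real \<Rightarrow> real \<Rightarrow> (real^4) set \<Rightarrow> bool" where
  "B_ideal lam bet I \<longleftrightarrow> subspace I \<and> (\<forall>x. \<forall>y\<in>I. Bmult lam bet x y \<in> I)"

definition nonzero_proper_ideal :: "real \<Rightarrow> real \<Rightarrow> (real^4) set \<Rightarrow> bool" where
  "nonzero_proper_ideal lam bet I \<longleftrightarrow> B_ideal lam bet I \<and> I \<noteq> {0} \<and> I \<noteq> UNIV"

end

theory Submission
  imports Defs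
begin

(* Write p = (lambda-beta)/lambda and q = (lambda+beta-1)/lambda for the structure constants
   of a*b = p a + q b + c.  Every coordinate subspace of real^4 is the span of the
   corresponding basis vectors, so the candidate ideals are described by vanishing
   coordinates, and checking which of them are ideals is coordinate arithmetic.
   Conversely, let I be a nonzero proper ideal.
   (1) If some element of I has a nonzero o-coordinate, then o * v and o * (o * v) produce
       o itself, and o generates the whole algebra; so I lies in span{a,b,c}.
   (2) Multiplying by o projects I onto its (a,b)-part, hence I is the sum of its
       (a,b)-part and its c-part, and multiplying by a and b shows c lies in I.
   (3) A nonzero (a,b)-part forces a or b into I, because p + q <> 1; moreover a in I
       forces b in I unless q = 0, and b in I forces a in I unless p = 0.
   Sorting I by which of a, b it contains yields the four possible ideals, and the main
   theorem is the resulting case distinction on (lambda,beta). *)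

lemma basis_vector_nth:
  "bo $ i = (if i = 1 then 1 else 0)" "ba $ i = (if i = 2 then 1 else 0)"
  "bb $ i = (if i = 3 then 1 else 0)" "bc $ i = (if i = 4 then 1 else 0)"
  by (auto simp: bo_def ba_def bb_def bc_def axis_def)

lemma vec4_eq_iff:
  "(x::real^4) = y \<longleftrightarrow> x$1 = y$1 \<and> x$2 = y$2 \<and> x$3 = y$3 \<and> x$4 = y$4"
  by (auto simp: vec_eq_iff forall_4)

lemma Bmult_nth:
  "Bmult l t x y $ 1 = x$1 * y$1"
  "Bmult l t x y $ 2 = l * (x$1*y$2 + x$2*y$1) + x$2*y$2 + ((l-t)/l) * (x$2*y$3 + x$3*y$2)"
  "Bmult l t x y $ 3 = l * (x$1*y$3 + x$3*y$1) + x$3*y$3 + ((l+t-1)/l) * (x$2*y$3 + x$3*y$2)"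
  "Bmult l t x y $ 4 = x$2*y$3 + x$3*y$2"
  by (simp_all add: Bmult_def sum_4 Btab_def basis_vector_nth algebra_simps)

lemma span_coordinate_axes:
  "span ((\<lambda>k. axis k 1) ` K) = {x :: real^'n. \<forall>i. i \<notin> K \<longrightarrow> x $ i = 0}"
proof -
  have basis: "(\<lambda>k. axis k 1) ` K \<subseteq> (Basis :: (real^'n) set)"
    by (auto simp: Basis_vec_def)
  show ?thesis
    unfolding span_substd_basis[OF basis]
    by (auto simp: Basis_vec_def inner_axis axis_eq_axis image_iff)
qed

lemma span_basis_vectors:
  "span {bc} = {x. x$1 = 0 \<and> x$2 = 0 \<and> x$3 = 0}"
  "span {ba, bc} = {x. x$1 = 0 \<and> x$3 = 0}"
  "span {bb, bc} = {x. x$1 = 0 \<and> x$2 = 0}"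
  "span {ba, bb, bc} = {x. x$1 = 0}"
  "span {bo, ba, bb, bc} = UNIV"
  using span_coordinate_axes[of "{4::4}"] span_coordinate_axes[of "{2,4::4}"]
    span_coordinate_axes[of "{3,4::4}"] span_coordinate_axes[of "{2,3,4::4}"]
    span_coordinate_axes[of "{1,2,3,4::4}"]
  by (simp_all add: bo_def ba_def bb_def bc_def forall_4)

lemma subspace_scale_cancel:
  assumes "subspace S" "c *\<^sub>R x \<in> S" "c \<noteq> 0"
  shows "x \<in> S"
  using subspace_scale[OF assms(1,2), of "inverse c"] assms(3) by simp

lemma candidate_ideals:
  "nonzero_proper_ideal l t (span {bc})"
  "nonzero_proper_ideal l t (span {ba, bb, bc})"
  "t = 1 - l \<Longrightarrow> nonzero_proper_ideal l t (span {ba, bc})"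
  "t = l \<Longrightarrow> nonzero_proper_ideal l t (span {bb, bc})"
proof -
  have nonzero_proper: "nonzero_proper_ideal l t (span S)"
    if "bc \<in> span S" "bo \<notin> span S" "\<forall>x. \<forall>y\<in>span S. Bmult l t x y \<in> span S" for S
  proof -
    have "bc \<noteq> 0" by (simp add: vec4_eq_iff basis_vector_nth)
    with that show ?thesis
      unfolding nonzero_proper_ideal_def B_ideal_def by auto
  qed
  show "nonzero_proper_ideal l t (span {bc})"
    "nonzero_proper_ideal l t (span {ba, bb, bc})"
    "t = 1 - l \<Longrightarrow> nonzero_proper_ideal l t (span {ba, bc})"
    "t = l \<Longrightarrow> nonzero_proper_ideal l t (span {bb, bc})"
    by (rule nonzero_proper; simp add: span_basis_vectors basis_vector_nth Bmult_nth)+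
qed

context
  fixes l t :: real and I :: "(real^4) set"
  assumes l_pos: "0 < l" and l_less_1: "l < 1" and ideal: "B_ideal l t I"
begin

lemma ideal_subspace: "subspace I"
  using ideal by (simp add: B_ideal_def)

lemma ideal_mult: "y \<in> I \<Longrightarrow> Bmult l t x y \<in> I"
  using ideal by (simp add: B_ideal_def)

lemma ideal_UNIV_if_o: "bo \<in> I \<Longrightarrow> I = UNIV"
proof -
  assume o: "bo \<in> I"
  have "ba = (1/l) *\<^sub>R Bmult l t ba bo" "bb = (1/l) *\<^sub>R Bmult l t bb bo"
    using l_pos by (simp_all add: vec4_eq_iff Bmult_nth basis_vector_nth)
  then have a: "ba \<in> I" and b: "bb \<in> I"
    using o ideal_mult ideal_subspace subspace_scale by metis+
  have "bc = Bmult l t ba bb - ((l-t)/l) *\<^sub>R ba - ((l+t-1)/l) *\<^sub>R bb"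
    by (simp add: vec4_eq_iff Bmult_nth basis_vector_nth)
  then have c: "bc \<in> I"
    using a b ideal_mult ideal_subspace subspace_scale subspace_diff by metis
  have "span {bo, ba, bb, bc} \<subseteq> I"
    using o a b c ideal_subspace by (simp add: span_minimal)
  then show "I = UNIV" by (auto simp: span_basis_vectors)
qed

text \<open>An element with nonzero o-coordinate v1 yields o: lambda (o v) - o (o v) = (lambda - 1) v1 o.\<close>
lemma o_mem_if_first_coord: "v \<in> I \<Longrightarrow> v$1 \<noteq> 0 \<Longrightarrow> bo \<in> I"
proof -
  assume v: "v \<in> I" "v$1 \<noteq> 0"
  let ?w = "Bmult l t bo v"
  have "(l-1) * v$1 \<noteq> 0" using v(2) l_less_1 by simp
  moreover have "l * v$1 - v$1 = (l-1) * v$1" by (simp add: algebra_simps)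
  ultimately have "bo = (1 / ((l-1) * v$1)) *\<^sub>R (l *\<^sub>R ?w - Bmult l t bo ?w)"
    by (simp add: vec4_eq_iff Bmult_nth basis_vector_nth)
  then show "bo \<in> I"
    using v(1) ideal_mult ideal_subspace subspace_scale subspace_diff by metis
qed

lemma proper_ideal_first_coord: "I \<noteq> UNIV \<Longrightarrow> v \<in> I \<Longrightarrow> v$1 = 0"
  using o_mem_if_first_coord ideal_UNIV_if_o by blast

text \<open>For an ideal containing c, a nonzero q forces b next to a (since b a = p a + q b + c),
  and a nonzero p forces a next to b.\<close>
lemma b_mem_if_a_mem:
  assumes "bc \<in> I" "ba \<in> I" "t \<noteq> 1 - l"
  shows "bb \<in> I"
proof -
  have "((l+t-1)/l) *\<^sub>R bb = Bmult l t bb ba - ((l-t)/l) *\<^sub>R ba - bc"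
    by (simp add: vec4_eq_iff Bmult_nth basis_vector_nth)
  then have "((l+t-1)/l) *\<^sub>R bb \<in> I"
    using assms ideal_mult ideal_subspace subspace_scale subspace_diff by metis
  then show ?thesis
    using assms(3) l_pos ideal_subspace subspace_scale_cancel by force
qed

lemma a_mem_if_b_mem:
  assumes "bc \<in> I" "bb \<in> I" "t \<noteq> l"
  shows "ba \<in> I"
proof -
  have "((l-t)/l) *\<^sub>R ba = Bmult l t ba bb - ((l+t-1)/l) *\<^sub>R bb - bc"
    by (simp add: vec4_eq_iff Bmult_nth basis_vector_nth)
  then have "((l-t)/l) *\<^sub>R ba \<in> I"
    using assms ideal_mult ideal_subspace subspace_scale subspace_diff by metis
  then show ?thesis
    using assms(3) l_pos ideal_subspace subspace_scale_cancel by force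
qed

context
  assumes proper: "I \<noteq> UNIV"
begin

text \<open>Multiplication by o is lambda times the projection onto the (a,b)-part.\<close>
lemma ab_part_mem: "v \<in> I \<Longrightarrow> v$2 *\<^sub>R ba + v$3 *\<^sub>R bb \<in> I"
proof -
  assume v: "v \<in> I"
  have "v$2 *\<^sub>R ba + v$3 *\<^sub>R bb = (1/l) *\<^sub>R Bmult l t bo v"
    using l_pos proper_ideal_first_coord[OF proper v]
    by (simp add: vec4_eq_iff Bmult_nth basis_vector_nth)
  then show ?thesis
    using v ideal_mult ideal_subspace subspace_scale by metis
qed

lemma c_part_mem: "v \<in> I \<Longrightarrow> v$4 *\<^sub>R bc \<in> I"
proof -
  assume v: "v \<in> I"
  have "v$4 *\<^sub>R bc = v - (v$2 *\<^sub>R ba + v$3 *\<^sub>R bb)"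
    using proper_ideal_first_coord[OF proper v] by (simp add: vec4_eq_iff basis_vector_nth)
  then show ?thesis
    using v ab_part_mem ideal_subspace subspace_diff by metis
qed

text \<open>The c-coordinates of a v and b v are v3 and v2, so every nonzero element yields c.\<close>
lemma c_mem: "I \<noteq> {0} \<Longrightarrow> bc \<in> I"
proof -
  assume "I \<noteq> {0}"
  then obtain v where v: "v \<in> I" "v \<noteq> 0"
    using ideal_subspace subspace_0 by blast
  have "v$2 *\<^sub>R bc \<in> I" "v$3 *\<^sub>R bc \<in> I" "v$4 *\<^sub>R bc \<in> I"
    using c_part_mem[OF ideal_mult[OF v(1), of bb]] c_part_mem[OF ideal_mult[OF v(1), of ba]]
      c_part_mem[OF v(1)]
    by (simp_all add: Bmult_nth basis_vector_nth)
  moreover have "v$2 \<noteq> 0 \<or> v$3 \<noteq> 0 \<or> v$4 \<noteq> 0"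
    using v proper_ideal_first_coord[OF proper v(1)] by (auto simp: vec4_eq_iff)
  ultimately show "bc \<in> I"
    using ideal_subspace subspace_scale_cancel by blast
qed

text \<open>An element with nonzero (a,b)-part u = x a + y b forces a or b into I: the elements
  x (a u - y c) - (x + y p) u = y (x (q - 1) - y p) b  and
  (x q + y) u - y (b u - x c) = x (x q + y (1 - p)) a  lie in I, and the two brackets
  cannot vanish simultaneously because p + q <> 1.\<close>
lemma a_or_b_mem:
  assumes c: "bc \<in> I" and v: "v \<in> I" "v$2 \<noteq> 0 \<or> v$3 \<noteq> 0"
  shows "ba \<in> I \<or> bb \<in> I"
proof -
  define x y where "x = v$2" and "y = v$3"
  define p q where "p = (l-t)/l" and "q = (l+t-1)/l"
  define u where "u = x *\<^sub>R ba + y *\<^sub>R bb"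
  have u: "u \<in> I" using ab_part_mem[OF v(1)] by (simp add: u_def x_def y_def)
  have "(y * (x*(q-1) - y*p)) *\<^sub>R bb = x *\<^sub>R (Bmult l t ba u - y *\<^sub>R bc) - (x + y*p) *\<^sub>R u"
    by (simp add: vec4_eq_iff Bmult_nth basis_vector_nth u_def p_def q_def algebra_simps)
  then have b_multiple: "(y * (x*(q-1) - y*p)) *\<^sub>R bb \<in> I"
    using u c ideal_mult ideal_subspace subspace_scale subspace_diff by metis
  have "(x * (x*q + y*(1-p))) *\<^sub>R ba = (x*q + y) *\<^sub>R u - y *\<^sub>R (Bmult l t bb u - x *\<^sub>R bc)"
    by (simp add: vec4_eq_iff Bmult_nth basis_vector_nth u_def p_def q_def algebra_simps)
  then have a_multiple: "(x * (x*q + y*(1-p))) *\<^sub>R ba \<in> I"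
    using u c ideal_mult ideal_subspace subspace_scale subspace_diff by metis
  have pq: "p + q \<noteq> 1"
    using l_pos l_less_1 by (simp add: p_def q_def field_simps)
  consider "y = 0" | "x = 0" | "x \<noteq> 0" "y \<noteq> 0" by blast
  then show ?thesis
  proof cases
    case 1
    then show ?thesis using u v(2) ideal_subspace subspace_scale_cancel
      by (auto simp: u_def x_def y_def)
  next
    case 2
    then show ?thesis using u v(2) ideal_subspace subspace_scale_cancel
      by (auto simp: u_def x_def y_def)
  next
    case 3
    have "x*(q-1) - y*p \<noteq> 0 \<or> x*q + y*(1-p) \<noteq> 0"
    proof (rule ccontr)
      assume "\<not> ?thesis"
      then have e1: "x*(q-1) - y*p = 0" and e2: "x*q + y*(1-p) = 0" by auto
      then have "y = -x" by (simp add: algebra_simps)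
      with e1 have "x * (p + q - 1) = 0" by (simp add: algebra_simps)
      then show False using 3 pq by simp
    qed
    then have "y * (x*(q-1) - y*p) \<noteq> 0 \<or> x * (x*q + y*(1-p)) \<noteq> 0" using 3 by simp
    then show ?thesis
      using a_multiple b_multiple subspace_scale_cancel[OF ideal_subspace] by blast
  qed
qed

lemma nonzero_proper_ideal_cases:
  assumes nonzero: "I \<noteq> {0}"
  shows "I = span {bc} \<or> I = span {ba, bb, bc}
    \<or> (t = 1 - l \<and> I = span {ba, bc}) \<or> (t = l \<and> I = span {bb, bc})"
proof -
  have c: "bc \<in> I" using c_mem nonzero by blast
  have first: "v$1 = 0" if "v \<in> I" for v
    using proper_ideal_first_coord[OF proper that] .
  have a_then: "v$3 = 0" if "ba \<in> I" "bb \<notin> I" "v \<in> I" for v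
  proof (rule ccontr)
    assume "v$3 \<noteq> 0"
    have "v$3 *\<^sub>R bb = (v$2 *\<^sub>R ba + v$3 *\<^sub>R bb) - v$2 *\<^sub>R ba" by simp
    then have "v$3 *\<^sub>R bb \<in> I"
      using that ab_part_mem ideal_subspace subspace_scale subspace_diff by metis
    then show False using \<open>v$3 \<noteq> 0\<close> that(2) ideal_subspace subspace_scale_cancel by blast
  qed
  have b_then: "v$2 = 0" if "ba \<notin> I" "bb \<in> I" "v \<in> I" for v
  proof (rule ccontr)
    assume "v$2 \<noteq> 0"
    have "v$2 *\<^sub>R ba = (v$2 *\<^sub>R ba + v$3 *\<^sub>R bb) - v$3 *\<^sub>R bb" by simp
    then have "v$2 *\<^sub>R ba \<in> I"
      using that ab_part_mem ideal_subspace subspace_scale subspace_diff by metis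
    then show False using \<open>v$2 \<noteq> 0\<close> that(1) ideal_subspace subspace_scale_cancel by blast
  qed
  have neither_then: "v$2 = 0 \<and> v$3 = 0" if "ba \<notin> I" "bb \<notin> I" "v \<in> I" for v
    using a_or_b_mem[OF c that(3)] that(1,2) by blast
  have span_eq: "span S = I" if "S \<subseteq> I" "I \<subseteq> span S" for S
    using span_subspace[OF that ideal_subspace] .
  consider "ba \<in> I" "bb \<in> I" | "ba \<in> I" "bb \<notin> I" | "ba \<notin> I" "bb \<in> I" | "ba \<notin> I" "bb \<notin> I"
    by blast
  then show ?thesis
  proof cases
    case 1
    then have "span {ba, bb, bc} = I"
      using c first by (intro span_eq) (auto simp: span_basis_vectors)
    then show ?thesis by simp
  next
    case 2
    then have "span {ba, bc} = I"
      using c first a_then by (intro span_eq) (auto simp: span_basis_vectors)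
    moreover have "t = 1 - l" using 2 c b_mem_if_a_mem by blast
    ultimately show ?thesis by simp
  next
    case 3
    then have "span {bb, bc} = I"
      using c first b_then by (intro span_eq) (auto simp: span_basis_vectors)
    moreover have "t = l" using 3 c a_mem_if_b_mem by blast
    ultimately show ?thesis by simp
  next
    case 4
    then have "span {bc} = I"
      using c first neither_then by (intro span_eq) (auto simp: span_basis_vectors)
    then show ?thesis by simp
  qed
qed

end

end

lemma nonzero_proper_ideals:
  assumes "0 < l" "l < 1"
  shows "{I. nonzero_proper_ideal l t I} =
    {I. I = span {bc} \<or> I = span {ba, bb, bc}
      \<or> (t = 1 - l \<and> I = span {ba, bc}) \<or> (t = l \<and> I = span {bb, bc})}"
  using nonzero_proper_ideal_cases[OF assms] candidate_ideals
  by (auto simp: nonzero_proper_ideal_def)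

theorem mainTheorem7:
  fixes lam bet :: real
  assumes "0 < lam" "lam < 1" "0 < bet" "bet < 1"
  shows "(bet = lam \<and> lam \<noteq> 1/2 \<longrightarrow>
            {I. nonzero_proper_ideal lam bet I} = {span {bc}, span {bb, bc}, span {ba, bb, bc}})
       \<and> (bet = 1 - lam \<and> lam \<noteq> 1/2 \<longrightarrow>
            {I. nonzero_proper_ideal lam bet I} = {span {bc}, span {ba, bc}, span {ba, bb, bc}})
       \<and> (bet \<noteq> lam \<and> bet \<noteq> 1 - lam \<longrightarrow>
            {I. nonzero_proper_ideal lam bet I} = {span {bc}, span {ba, bb, bc}})
       \<and> (lam = 1/2 \<and> bet = 1/2 \<longrightarrow>
            {I. nonzero_proper_ideal lam bet I} =
              {span {bc}, span {ba, bc}, span {bb, bc}, span {ba, bb, bc}})"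
  unfolding nonzero_proper_ideals[OF assms(1,2)] by auto

end
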